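(* Let $d\ge1$, $\mathcal{X}=\mathbb{R}^d$, starting point $x_0=\mathbf{0}$, and $0<\mu\le L$. There exists a sequence of differentiable functions $f_1,\dots,f_T:\mathbb{R}^d\to[0,\infty)$, each satisfying $\frac{\mu}{2}\|y-x\|^2\le f_t(y)-f_t(x)-\langle\nabla f_t(x),y-x\rangle\le\frac{L}{2}\|y-x\|^2$ for all $x,y$, such that the OMGD algorithm with $K=\lceil\frac{L+\mu}{2\mu}\ln4\rceil$ satisfies $$\frac{C_{\mathcal{A}_o}}{C_{\mathsf{OPT}}}\ge 1+\frac{L+1}{4\mu}+\frac{L+1}{8}.$$
   Context: Quadratic-switching cost of $(y_1,\dots,y_T)$ with $y_0=x_0$: $\sum_{t=1}^T\big(f_t(y_t)+\frac12\|y_t-y_{t-1}\|^2\big)$; $C_{\mathsf{OPT}}$ is its minimum over all sequences. The OMGD algorithm with parameter $K$ produces $x_1=x_0$ and, for $t=2,\dots,T$: $z_t^{(0)}=x_{t-1}$, $z_t^{(k)}=\Pi_{\mathcal{X}}\big(z_t^{(k-1)}-\frac1L\nabla f_{t-1}(z_t^{(k-1)})\big)$ for $k=1,\dots,K$, and $x_t=z_t^{(K)}$ ($\Pi_{\mathcal{X}}$ is Euclidean projection, here the identity). $C_{\mathcal{A}_o}$ is the quadratic-switching cost of $(x_1,\dots,x_T)$. *)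

theory Defs
  imports "HOL-Analysis.Analysis"
begin

text \<open>Quadratic-switching cost of a sequence y (indices 1..T), with y 0 playing the role of y_0 = x_0.\<close>
definition qs_cost :: "nat \<Rightarrow> (nat \<Rightarrow> 'a::euclidean_space \<Rightarrow> real) \<Rightarrow> (nat \<Rightarrow> 'a) \<Rightarrow> real" where
  "qs_cost T f y = (\<Sum>t=1..T. f t (y t) + (1/2) * (norm (y t - y (t - 1)))^2)"

definition C_OPT :: "nat \<Rightarrow> (nat \<Rightarrow> 'a::euclidean_space \<Rightarrow> real) \<Rightarrow> 'a \<Rightarrow> real" where
  "C_OPT T f x0 = (INF y \<in> {y. y 0 = x0}. qs_cost T f y)"

text \<open>OMGD iterates: g t is the gradient of f_t; X = whole space so projection is identity.
  omgd L K g x0 t = x_t (with x_0 = x_1 = x0).\<close>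
fun omgd :: "real \<Rightarrow> nat \<Rightarrow> (nat \<Rightarrow> 'a::euclidean_space \<Rightarrow> 'a) \<Rightarrow> 'a \<Rightarrow> nat \<Rightarrow> 'a" where
  "omgd L K g x0 0 = x0"
| "omgd L K g x0 (Suc 0) = x0"
| "omgd L K g x0 (Suc (Suc t)) =
     ((\<lambda>z. z - (1 / L) *\<^sub>R g (Suc t) z) ^^ K) (omgd L K g x0 (Suc t))"

end

theory Submission
  imports Defs
begin

text \<open>Two rounds suffice. Round 1 pulls towards a unit vector \<open>e\<close> with the weak curvature \<open>\<mu>\<close>,
  round 2 pulls back to the origin with the strong curvature \<open>L\<close>. OMGD only sees \<open>f\<^sub>1\<close> when
  choosing \<open>x\<^sub>2\<close>, and \<open>K\<close> gradient steps of size \<open>1/L\<close> on \<open>f\<^sub>1\<close> contract the distance to \<open>e\<close>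
  by \<open>(1 - \<mu>/L)\<^sup>K \<le> 1/2\<close>, so \<open>x\<^sub>2\<close> lies at least halfway to \<open>e\<close> and round 2 costs OMGD at least
  \<open>(L + 1)/8\<close>. The offline sequence \<open>y\<^sub>1 = \<mu>/(\<mu> + 2) e\<close>, \<open>y\<^sub>2 = 0\<close> costs only \<open>\<mu>/(\<mu> + 2)\<close>.\<close>

lemma has_derivative_half_sq_dist:
  fixes e :: "'a::real_inner"
  shows "((\<lambda>x. c/2 * (norm (x - e))^2) has_derivative (\<lambda>h. (c *\<^sub>R (x - e)) \<bullet> h)) (at x)"
  unfolding power2_norm_eq_inner
  by (auto intro!: derivative_eq_intros simp: fun_eq_iff inner_commute)

lemma half_sq_dist_bregman:
  fixes x y e :: "'a::real_inner"
  shows "c/2 * (norm (y - e))^2 - c/2 * (norm (x - e))^2 - (c *\<^sub>R (x - e)) \<bullet> (y - x)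
           = c/2 * (norm (y - x))^2"
  by (simp add: power2_norm_eq_inner inner_commute algebra_simps)

lemma sq_dist_weighted_sum_ge:
  fixes y e :: "'a::real_inner"
  assumes "0 < a" and "0 < b"
  shows "a * b / (a + b) * (norm e)^2 \<le> a * (norm (y - e))^2 + b * (norm y)^2"
proof -
  have "(a + b) * (a * (norm (y - e))^2 + b * (norm y)^2)
          = (norm ((a + b) *\<^sub>R y - a *\<^sub>R e))^2 + a * b * (norm e)^2"
    by (simp add: power2_norm_eq_inner inner_commute algebra_simps)
  then have "a * b * (norm e)^2 \<le> (a + b) * (a * (norm (y - e))^2 + b * (norm y)^2)"
    by simp
  with assms show ?thesis by (simp add: field_simps)
qed

lemma gradient_steps_half_sq_dist:
  fixes z e :: "'a::real_vector"
  shows "((\<lambda>z. z - (1 / L) *\<^sub>R (\<mu> *\<^sub>R (z - e))) ^^ n) z = e + (1 - \<mu> / L)^n *\<^sub>R (z - e)"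
proof (induction n)
  case 0
  show ?case by simp
next
  case (Suc n)
  have "e + (1 - \<mu> / L)^n *\<^sub>R (z - e) - (1 / L) *\<^sub>R (\<mu> *\<^sub>R ((1 - \<mu> / L)^n *\<^sub>R (z - e)))
          = e + (1 - \<mu> / L)^Suc n *\<^sub>R (z - e)"
    by (simp add: algebra_simps)
  with Suc show ?case by simp
qed

lemma one_minus_power_le_exp:
  fixes r :: real
  assumes "r \<le> 1"
  shows "(1 - r)^n \<le> exp (- (n * r))"
proof -
  have "(1 - r)^n \<le> exp (- r)^n"
    using assms exp_ge_add_one_self[of "- r"] by (intro power_mono) auto
  then show ?thesis by (simp add: exp_of_nat_mult[symmetric])
qed

lemma qs_cost_nonneg:
  assumes "\<And>t x. t \<in> {1..T} \<Longrightarrow> 0 \<le> f t x"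
  shows "0 \<le> qs_cost T f y"
  unfolding qs_cost_def using assms by (intro sum_nonneg add_nonneg_nonneg) auto

lemma C_OPT_le_qs_cost:
  assumes "\<And>t x. t \<in> {1..T} \<Longrightarrow> 0 \<le> f t x" and "y 0 = x0"
  shows "C_OPT T f x0 \<le> qs_cost T f y"
  unfolding C_OPT_def using assms
  by (intro cINF_lower bdd_belowI[where m = 0]) (auto intro: qs_cost_nonneg)

lemma le_C_OPT:
  assumes "\<And>y. y 0 = x0 \<Longrightarrow> b \<le> qs_cost T f y"
  shows "b \<le> C_OPT T f x0"
  unfolding C_OPT_def using assms by (intro cINF_greatest) auto

lemma qs_cost_two:
  "qs_cost 2 f y = f 1 (y 1) + 1/2 * (norm (y 1 - y 0))^2 + f 2 (y 2) + 1/2 * (norm (y 2 - y 1))^2"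
  by (simp add: qs_cost_def numeral_2_eq_2)

lemma omgd_two: "omgd L K g x0 2 = ((\<lambda>z. z - (1 / L) *\<^sub>R g 1 z) ^^ K) x0"
  by (simp add: numeral_2_eq_2)

definition hard_instance_loss :: "real \<Rightarrow> real \<Rightarrow> 'a::real_inner \<Rightarrow> nat \<Rightarrow> 'a \<Rightarrow> real" where
  "hard_instance_loss \<mu> L e t x = (if t = 1 then \<mu>/2 * (norm (x - e))^2 else L/2 * (norm x)^2)"

definition hard_instance_grad :: "real \<Rightarrow> real \<Rightarrow> 'a::real_inner \<Rightarrow> nat \<Rightarrow> 'a \<Rightarrow> 'a" where
  "hard_instance_grad \<mu> L e t x = (if t = 1 then \<mu> *\<^sub>R (x - e) else L *\<^sub>R x)"

lemma hard_instance_has_derivative: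
  "(hard_instance_loss \<mu> L e t has_derivative (\<lambda>h. hard_instance_grad \<mu> L e t x \<bullet> h)) (at x)"
  using has_derivative_half_sq_dist[of \<mu> e x] has_derivative_half_sq_dist[of L 0 x]
  by (cases "t = 1") (simp_all add: hard_instance_loss_def[abs_def] hard_instance_grad_def)

lemma hard_instance_nonneg:
  assumes "0 \<le> \<mu>" and "0 \<le> L"
  shows "0 \<le> hard_instance_loss \<mu> L e t x"
  using assms by (simp add: hard_instance_loss_def)

lemma hard_instance_bregman:
  "hard_instance_loss \<mu> L e t y - hard_instance_loss \<mu> L e t x - hard_instance_grad \<mu> L e t x \<bullet> (y - x)
     = (if t = 1 then \<mu> else L) / 2 * (norm (y - x))^2"
  using half_sq_dist_bregman[of \<mu> y e x] half_sq_dist_bregman[of L y 0 x]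
  by (simp add: hard_instance_loss_def hard_instance_grad_def)

lemma omgd_hard_instance:
  "omgd L K (hard_instance_grad \<mu> L e) 0 2 = (1 - (1 - \<mu> / L)^K) *\<^sub>R e"
proof -
  have first_round: "(\<lambda>z. z - (1 / L) *\<^sub>R hard_instance_grad \<mu> L e 1 z)
                      = (\<lambda>z. z - (1 / L) *\<^sub>R (\<mu> *\<^sub>R (z - e)))"
    by (simp add: hard_instance_grad_def)
  show ?thesis
    unfolding omgd_two first_round gradient_steps_half_sq_dist by (simp add: algebra_simps)
qed

lemma qs_cost_omgd_hard_instance:
  assumes "norm e = 1"
  shows "qs_cost 2 (hard_instance_loss \<mu> L e) (omgd L K (hard_instance_grad \<mu> L e) 0)
           = \<mu>/2 + (L + 1)/2 * (1 - (1 - \<mu> / L)^K)^2"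
proof -
  define c where "c = 1 - (1 - \<mu> / L)^K"
  have "omgd L K (hard_instance_grad \<mu> L e) 0 2 = c *\<^sub>R e"
    unfolding c_def by (rule omgd_hard_instance)
  with assms show ?thesis
    unfolding c_def[symmetric]
    by (simp add: qs_cost_two hard_instance_loss_def power_mult_distrib algebra_simps)
qed

lemma C_OPT_hard_instance_le:
  fixes e :: "'a::euclidean_space"
  assumes "norm e = 1" and "0 < \<mu>" and "0 \<le> L"
  shows "C_OPT 2 (hard_instance_loss \<mu> L e) 0 \<le> \<mu> / (\<mu> + 2)"
proof -
  define u where "u = \<mu> / (\<mu> + 2)"
  define y :: "nat \<Rightarrow> 'a" where "y = (\<lambda>t. if t = 1 then u *\<^sub>R e else 0)"
  have "C_OPT 2 (hard_instance_loss \<mu> L e) 0 \<le> qs_cost 2 (hard_instance_loss \<mu> L e) y"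
    using assms by (intro C_OPT_le_qs_cost hard_instance_nonneg) (auto simp: y_def)
  also have "\<dots> = \<mu>/2 * (u - 1)^2 + u^2"
    using assms(1)
    by (simp add: qs_cost_two y_def hard_instance_loss_def power_mult_distrib
        flip: scaleR_diff_left[of u 1 e, simplified])
  also have "\<dots> = \<mu> / (\<mu> + 2)"
    using assms(2) unfolding u_def by (simp add: divide_simps power2_eq_square) algebra
  finally show ?thesis .
qed

lemma C_OPT_hard_instance_pos:
  fixes e :: "'a::euclidean_space"
  assumes "norm e = 1" and "0 < \<mu>" and "0 \<le> L"
  shows "0 < C_OPT 2 (hard_instance_loss \<mu> L e) 0"
proof -
  have "\<mu> / (2 * (\<mu> + 1)) \<le> C_OPT 2 (hard_instance_loss \<mu> L e) 0"
  proof (rule le_C_OPT)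
    fix y :: "nat \<Rightarrow> 'a"
    assume "y 0 = 0"
    have "\<mu> / (2 * (\<mu> + 1)) = (\<mu>/2) * (1/2) / (\<mu>/2 + 1/2) * (norm e)^2"
      using assms by (simp add: field_simps)
    also have "\<dots> \<le> \<mu>/2 * (norm (y 1 - e))^2 + 1/2 * (norm (y 1))^2"
      using assms by (intro sq_dist_weighted_sum_ge) auto
    also have "\<dots> \<le> qs_cost 2 (hard_instance_loss \<mu> L e) y"
      using \<open>y 0 = 0\<close> hard_instance_nonneg[of \<mu> L e 2 "y 2"] assms
      by (simp add: qs_cost_two hard_instance_loss_def)
    finally show "\<mu> / (2 * (\<mu> + 1)) \<le> qs_cost 2 (hard_instance_loss \<mu> L e) y" .
  qed
  moreover have "0 < \<mu> / (2 * (\<mu> + 1))" using assms by simp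
  ultimately show ?thesis by linarith
qed

lemma gradient_steps_contraction_le_half:
  fixes \<mu> L :: real
  assumes "0 < \<mu>" and "\<mu> \<le> L"
  shows "(1 - \<mu> / L)^(nat \<lceil>(L + \<mu>) / (2 * \<mu>) * ln 4\<rceil>) \<le> 1/2"
proof -
  define K where "K = nat \<lceil>(L + \<mu>) / (2 * \<mu>) * ln 4\<rceil>"
  have "ln 4 = 2 * ln (2::real)"
    using ln_mult[of 2 2] by simp
  then have "(L + \<mu>) / \<mu> * ln 2 \<le> K"
    using real_nat_ceiling_ge[of "(L + \<mu>) / (2 * \<mu>) * ln 4"] unfolding K_def by simp
  moreover have "L / \<mu> * ln 2 \<le> (L + \<mu>) / \<mu> * ln 2"
    using assms by (intro mult_right_mono divide_right_mono) auto
  ultimately have "L / \<mu> * ln 2 \<le> K" by linarith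
  then have "ln 2 \<le> K * (\<mu> / L)"
    using assms by (simp add: field_simps)
  have "(1 - \<mu> / L)^K \<le> exp (- (K * (\<mu> / L)))"
    using assms by (intro one_minus_power_le_exp) simp
  also have "\<dots> \<le> exp (- ln 2)"
    using \<open>ln 2 \<le> K * (\<mu> / L)\<close> by simp
  finally show ?thesis
    unfolding K_def by (simp add: exp_minus)
qed

lemma competitive_ratio_ge:
  fixes \<mu> L c opt :: real
  assumes "0 < \<mu>" and "0 \<le> L" and "1/2 \<le> c" and "0 < opt" and "opt \<le> \<mu> / (\<mu> + 2)"
  shows "1 + (L + 1) / (4 * \<mu>) + (L + 1) / 8 \<le> (\<mu>/2 + (L + 1)/2 * c^2) / opt"
proof -
  have "1/4 \<le> c^2"
    using assms(3) power_mono[of "1/2" c 2] by (simp add: power2_eq_square)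
  then have "(L + 1) * (1/4) \<le> (L + 1) * c^2"
    using assms(2) by (intro mult_left_mono) auto
  have "1 + (L + 1) / (4 * \<mu>) + (L + 1) / 8 \<le> (\<mu>/2 + (L + 1)/8) * ((\<mu> + 2) / \<mu>)"
    using assms(1,2) by (simp add: field_simps)
  also have "\<dots> \<le> (\<mu>/2 + (L + 1)/2 * c^2) * ((\<mu> + 2) / \<mu>)"
    using assms(1) \<open>(L + 1) * (1/4) \<le> (L + 1) * c^2\<close> by (intro mult_right_mono) auto
  also have "\<dots> \<le> (\<mu>/2 + (L + 1)/2 * c^2) * (1 / opt)"
    using assms by (intro mult_left_mono) (auto simp: field_simps)
  finally show ?thesis by simp
qed

theorem lemma6:
  fixes \<mu> L :: real
  assumes "0 < \<mu>" and "\<mu> \<le> L"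
  shows "\<exists>(T::nat) (f :: nat \<Rightarrow> 'a::euclidean_space \<Rightarrow> real) (g :: nat \<Rightarrow> 'a \<Rightarrow> 'a).
     T \<ge> 1 \<and>
     (\<forall>t\<in>{1..T}. \<forall>x. (f t has_derivative (\<lambda>h. g t x \<bullet> h)) (at x)) \<and>
     (\<forall>t\<in>{1..T}. \<forall>x. f t x \<ge> 0) \<and>
     (\<forall>t\<in>{1..T}. \<forall>x y.
        \<mu> / 2 * (norm (y - x))^2 \<le> f t y - f t x - g t x \<bullet> (y - x) \<and>
        f t y - f t x - g t x \<bullet> (y - x) \<le> L / 2 * (norm (y - x))^2) \<and>
     (let K = nat \<lceil>(L + \<mu>) / (2 * \<mu>) * ln 4\<rceil>
      in qs_cost T f (omgd L K g 0) / C_OPT T f 0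
           \<ge> 1 + (L + 1) / (4 * \<mu>) + (L + 1) / 8)"
proof -
  obtain e :: 'a where e: "norm e = 1"
    using nonempty_Basis norm_Basis by blast
  define K where "K = nat \<lceil>(L + \<mu>) / (2 * \<mu>) * ln 4\<rceil>"
  define f where "f = hard_instance_loss \<mu> L e"
  define g where "g = hard_instance_grad \<mu> L e"
  have "0 \<le> L" using assms by linarith
  have derivative: "(f t has_derivative (\<lambda>h. g t x \<bullet> h)) (at x)" for t x
    unfolding f_def g_def by (rule hard_instance_has_derivative)
  have nonneg: "0 \<le> f t x" for t x
    unfolding f_def using assms(1) \<open>0 \<le> L\<close> by (intro hard_instance_nonneg) auto
  have strong_smooth: "\<mu> / 2 * (norm (y - x))^2 \<le> f t y - f t x - g t x \<bullet> (y - x) \<and>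
                       f t y - f t x - g t x \<bullet> (y - x) \<le> L / 2 * (norm (y - x))^2" for t x y
    unfolding f_def g_def hard_instance_bregman using assms by (auto intro: mult_right_mono)
  have "1/2 \<le> 1 - (1 - \<mu> / L)^K"
    using gradient_steps_contraction_le_half[OF assms] unfolding K_def by linarith
  then have "1 + (L + 1) / (4 * \<mu>) + (L + 1) / 8 \<le> qs_cost 2 f (omgd L K g 0) / C_OPT 2 f 0"
    unfolding f_def g_def qs_cost_omgd_hard_instance[OF e]
    using assms(1) \<open>0 \<le> L\<close>
    by (intro competitive_ratio_ge C_OPT_hard_instance_pos[OF e] C_OPT_hard_instance_le[OF e])
  then show ?thesis
    using derivative nonneg strong_smooth unfolding Let_def K_def[symmetric]
    by (intro exI[of _ 2] exI[of _ f] exI[of _ g]) auto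
qed

end
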